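(* Let $p,q\ge1$, $\varepsilon\ge0$, $\Xi\subseteq\mathbb{R}^n$, $\mathcal{X}\subseteq\mathbb{R}^m$, and $F:\mathbb{R}^m\times\mathbb{R}^n\to\mathbb{R}$ such that for each $x\in\mathcal{X}$, $F(x,\cdot)$ is Lipschitz on $\Xi$ with respect to $\|\cdot\|_q$ with constant $\gamma_{x,F,q}=\|F(x,\cdot)\|_{\mathrm{Lip},q}<\infty$. Let $\widehat{\xi}_1,\dots,\widehat{\xi}_N\in\Xi$. Define $$\widehat J^{\mathrm S}_{N,p,q}(\varepsilon)=\inf_{x\in\mathcal{X}}\sup_{\mathbb{Q}\in\mathcal{B}_\varepsilon(\widehat{\mathbb{P}}_N)}\mathbb{E}_{\xi\sim\mathbb{Q}}[F(x,\xi)],\qquad \widehat J^{\mathrm A}_{N,p,q}(\varepsilon)=\inf_{x\in\mathcal{X}}\sup_{\mathbb{Q}\in\mathcal{B}_{\varepsilon\gamma_{x,F,q}}(\widehat{\mathbb{P}}_N^{x,F})}\mathbb{E}_{\zeta\sim\mathbb{Q}}[\zeta].$$ Then $\widehat J^{\mathrm S}_{N,p,q}(\varepsilon)\le\widehat J^{\mathrm A}_{N,p,q}(\varepsilon)$.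
   Context: $\widehat{\mathbb{P}}_N=\frac1N\sum_i\delta_{\widehat{\xi}_i}$ and $\widehat{\mathbb{P}}_N^{x,F}=\frac1N\sum_i\delta_{F(x,\widehat{\xi}_i)}$. $W_p$ is the $p$-Wasserstein distance: $W_p(\mu,\nu)=(\inf_\Pi\int\mathbf{d}^p\,d\Pi)^{1/p}$ over couplings $\Pi$ of $\mu,\nu$, for measures with finite $p$-th moments ($\mathcal{P}_p(S)$ denotes such measures on $S$). $\mathcal{B}_\varepsilon(\widehat{\mathbb{P}}_N)=\{\mathbb{Q}\in\mathcal{P}_p(\Xi):W_p(\mathbb{Q},\widehat{\mathbb{P}}_N)\le\varepsilon\}$ with cost $\|\xi-\zeta\|_q$; $\mathcal{B}_r(\widehat{\mathbb{P}}_N^{x,F})=\{\mathbb{Q}\in\mathcal{P}_p(F(x,\Xi)):W_p(\mathbb{Q},\widehat{\mathbb{P}}_N^{x,F})\le r\}$ with cost $|s-t|$, where $F(x,\Xi)$ is the image of $\Xi$ under $F(x,\cdot)$. $\|f\|_{\mathrm{Lip},q}=\sup_{\xi\ne\zeta\in\Xi}(f(\xi)-f(\zeta))/\|\xi-\zeta\|_q$. *)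

theory Defs
  imports "HOL-Probability.Probability"
begin

definition lqnorm :: "real \<Rightarrow> real ^ 'n \<Rightarrow> real" where
  "lqnorm q x = (\<Sum>i\<in>UNIV. \<bar>x $ i\<bar> powr q) powr (1 / q)"

text \<open>Lipschitz seminorm of f on S w.r.t. the q-norm: supremum of difference quotients
  (0 if S has fewer than two points; otherwise the set of quotients is symmetric, so the
  extra 0 does not change the supremum).\<close>
definition lip_quotients :: "real \<Rightarrow> (real ^ 'n \<Rightarrow> real) \<Rightarrow> (real ^ 'n) set \<Rightarrow> real set" where
  "lip_quotients q f S =
     {(f a - f b) / lqnorm q (a - b) | a b. a \<in> S \<and> b \<in> S \<and> a \<noteq> b}"

definition lip_norm :: "real \<Rightarrow> (real ^ 'n \<Rightarrow> real) \<Rightarrow> (real ^ 'n) set \<Rightarrow> real" where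
  "lip_norm q f S = Sup ({0} \<union> lip_quotients q f S)"

definition couplings :: "'a measure \<Rightarrow> 'a measure \<Rightarrow> ('a \<times> 'a) measure set" where
  "couplings M1 M2 = {C. sets C = sets (M1 \<Otimes>\<^sub>M M2) \<and> prob_space C \<and>
      distr C M1 fst = M1 \<and> distr C M2 snd = M2}"

text \<open>p-Wasserstein distance with cost d (for measures with finite p-th moments,
  the infimum is finite).\<close>
definition wasserstein :: "real \<Rightarrow> ('a \<Rightarrow> 'a \<Rightarrow> real) \<Rightarrow> 'a measure \<Rightarrow> 'a measure \<Rightarrow> real" where
  "wasserstein p d M1 M2 =
     enn2real (INF C\<in>couplings M1 M2. \<integral>\<^sup>+ z. ennreal (d (fst z) (snd z) powr p) \<partial>C) powr (1 / p)"

definition Pp :: "real \<Rightarrow> 'a::real_normed_vector set \<Rightarrow> 'a measure set" where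
  "Pp p S = {Q. sets Q = sets (restrict_space borel S) \<and> prob_space Q \<and>
                integrable Q (\<lambda>x. norm x powr p)}"

definition wball :: "real \<Rightarrow> ('a \<Rightarrow> 'a \<Rightarrow> real) \<Rightarrow> 'a::real_normed_vector set
                     \<Rightarrow> 'a measure \<Rightarrow> real \<Rightarrow> 'a measure set" where
  "wball p d S P r = {Q \<in> Pp p S. wasserstein p d Q P \<le> r}"

definition empirical :: "nat \<Rightarrow> (nat \<Rightarrow> 'a) \<Rightarrow> 'a::topological_space set \<Rightarrow> 'a measure" where
  "empirical N xi S = distr (uniform_count_measure {..<N}) (restrict_space borel S) xi"

definition J_S :: "real \<Rightarrow> real \<Rightarrow> real \<Rightarrow> (real ^ 'm) set \<Rightarrow> (real ^ 'n) set
                   \<Rightarrow> (real ^ 'm \<Rightarrow> real ^ 'n \<Rightarrow> real) \<Rightarrow> nat \<Rightarrow> (nat \<Rightarrow> real ^ 'n) \<Rightarrow> ereal" where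
  "J_S p q \<epsilon> X \<Xi> F N xi =
     (INF x\<in>X. SUP Q\<in>wball p (\<lambda>a b. lqnorm q (a - b)) \<Xi> (empirical N xi \<Xi>) \<epsilon>.
        ereal (\<integral>\<xi>. F x \<xi> \<partial>Q))"

definition J_A :: "real \<Rightarrow> real \<Rightarrow> real \<Rightarrow> (real ^ 'm) set \<Rightarrow> (real ^ 'n) set
                   \<Rightarrow> (real ^ 'm \<Rightarrow> real ^ 'n \<Rightarrow> real) \<Rightarrow> nat \<Rightarrow> (nat \<Rightarrow> real ^ 'n) \<Rightarrow> ereal" where
  "J_A p q \<epsilon> X \<Xi> F N xi =
     (INF x\<in>X. SUP Q\<in>wball p (\<lambda>s t. \<bar>s - t\<bar>) (F x ` \<Xi>)
                        (empirical N (\<lambda>i. F x (xi i)) (F x ` \<Xi>)) (\<epsilon> * lip_norm q (F x) \<Xi>).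
        ereal (\<integral>\<zeta>. \<zeta> \<partial>Q))"

end

theory Submission
  imports Defs
begin

(* Fix x and let f = F x, with Lipschitz seminorm \<gamma>. A measure Q in the Wasserstein ball around
   the empirical measure P is pushed forward to Q' = f_# Q on f ` \<Xi>, which has the same mean as
   f under Q. Pushing every coupling of Q and P forward along f \<times> f gives a coupling of Q' and
   f_# P, the empirical measure of the points f (xi i); since |f a - f b| \<le> \<gamma> \<parallel>a - b\<parallel>_q, its
   transport cost is at most \<gamma>^p times the original one. Hence W_p(Q', f_# P) \<le> \<gamma> \<epsilon>, so every
   value of the inner supremum defining J_S also occurs in the one defining J_A. *)

lemma lqnorm_nonneg: "lqnorm q v \<ge> 0"
  unfolding lqnorm_def by simp

lemma lqnorm_minus_commute: "lqnorm q (a - b) = lqnorm q (b - a)"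
  unfolding lqnorm_def by (simp add: abs_minus_commute)

lemma lqnorm_pos:
  assumes "q > 0" "v \<noteq> 0"
  shows "lqnorm q v > 0"
proof -
  obtain i where "v $ i \<noteq> 0" using assms(2) by (metis vec_eq_iff zero_index)
  then have "0 < \<bar>v $ i\<bar> powr q" by simp
  also have "\<dots> \<le> (\<Sum>j\<in>UNIV. \<bar>v $ j\<bar> powr q)"
    by (rule member_le_sum) auto
  finally show ?thesis unfolding lqnorm_def by simp
qed

lemma lqnorm_le_norm:
  assumes "q > 0"
  shows "lqnorm q (v :: real ^ 'n) \<le> real CARD('n) powr (1 / q) * norm v"
proof -
  have "(\<Sum>j\<in>UNIV. \<bar>v $ j\<bar> powr q) \<le> (\<Sum>j\<in>(UNIV :: 'n set). norm v powr q)"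
    by (intro sum_mono powr_mono2) (use assms in \<open>auto simp: component_le_norm_cart\<close>)
  also have "\<dots> = real CARD('n) * norm v powr q" by simp
  finally have "lqnorm q v \<le> (real CARD('n) * norm v powr q) powr (1 / q)"
    unfolding lqnorm_def by (intro powr_mono2) (use assms in \<open>auto intro: sum_nonneg\<close>)
  also have "\<dots> = real CARD('n) powr (1 / q) * norm v"
    using assms by (simp add: powr_mult powr_powr)
  finally show ?thesis .
qed

lemma borel_measurable_lqnorm [measurable]: "lqnorm q \<in> borel_measurable borel"
  unfolding lqnorm_def by measurable

lemma lip_norm_nonneg: "bdd_above (lip_quotients q f S) \<Longrightarrow> lip_norm q f S \<ge> 0"
  unfolding lip_norm_def by (rule cSup_upper) auto

lemma abs_diff_le_lip_norm:
  assumes "q > 0" and bdd: "bdd_above (lip_quotients q f S)" and "a \<in> S" "b \<in> S"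
  shows "\<bar>f a - f b\<bar> \<le> lip_norm q f S * lqnorm q (a - b)"
proof (cases "a = b")
  case True
  then show ?thesis using lip_norm_nonneg[OF bdd] by (simp add: lqnorm_nonneg)
next
  case False
  have pos: "lqnorm q (a - b) > 0" using False assms(1) by (intro lqnorm_pos) auto
  have bdd': "bdd_above ({0} \<union> lip_quotients q f S)" using bdd by auto
  have "(f a - f b) / lqnorm q (a - b) \<le> lip_norm q f S"
    unfolding lip_norm_def using assms False
    by (intro cSup_upper[OF _ bdd']) (auto simp: lip_quotients_def)
  moreover have "(f b - f a) / lqnorm q (a - b) \<le> lip_norm q f S"
    unfolding lip_norm_def lqnorm_minus_commute[of q a b] using assms False
    by (intro cSup_upper[OF _ bdd']) (auto simp: lip_quotients_def)
  ultimately show ?thesis using pos by (auto simp: abs_if field_simps)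
qed

lemma lipschitz_on_lip_norm:
  fixes f :: "real ^ 'n \<Rightarrow> real"
  assumes "q > 0" and bdd: "bdd_above (lip_quotients q f S)"
  shows "(lip_norm q f S * real CARD('n) powr (1 / q))-lipschitz_on S f"
proof (rule lipschitz_onI)
  fix a b assume "a \<in> S" "b \<in> S"
  then have "\<bar>f a - f b\<bar> \<le> lip_norm q f S * lqnorm q (a - b)"
    by (rule abs_diff_le_lip_norm[OF assms])
  also have "\<dots> \<le> lip_norm q f S * (real CARD('n) powr (1 / q) * norm (a - b))"
    using lqnorm_le_norm[OF assms(1)] lip_norm_nonneg[OF bdd] by (rule mult_left_mono)
  finally show "dist (f a) (f b) \<le> lip_norm q f S * real CARD('n) powr (1 / q) * dist a b"
    by (simp add: dist_norm dist_real_def mult.assoc)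
qed (simp add: lip_norm_nonneg[OF bdd])

lemma powr_add_le:
  fixes a b p :: real
  assumes "a \<ge> 0" "b \<ge> 0" "p \<ge> 0"
  shows "(a + b) powr p \<le> 2 powr p * (a powr p + b powr p)"
proof -
  have "(a + b) powr p \<le> (2 * max a b) powr p"
    using assms by (intro powr_mono2) auto
  also have "\<dots> = 2 powr p * max a b powr p" using assms by (simp add: powr_mult)
  also have "\<dots> \<le> 2 powr p * (a powr p + b powr p)"
    by (intro mult_left_mono) (auto simp: max_def)
  finally show ?thesis .
qed

lemma ennreal_mult_INF:
  fixes c :: ennreal and f :: "'a \<Rightarrow> ennreal"
  assumes "c < top" "A \<noteq> {}"
  shows "c * (INF x\<in>A. f x) = (INF x\<in>A. c * f x)"
proof -
  have "c * Inf (f ` A) = (INF s\<in>f ` A. c * s)"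
  proof (rule continuous_at_Inf_mono)
    show "mono ((*) c)" by (auto simp: mono_def mult_left_mono)
    show "continuous (at_right (Inf (f ` A))) ((*) c)"
      unfolding continuous_within by (rule ennreal_tendsto_cmult[OF assms(1) tendsto_ident_at])
  qed (use assms in auto)
  then show ?thesis by (simp add: image_comp)
qed

lemma measurable_restrict_ident [measurable]: "(\<lambda>x. x) \<in> borel_measurable (restrict_space borel S)"
  by (rule measurable_restrict_space1) simp

lemma borel_measurable_diff_cost:
  fixes g :: "'a::{real_normed_vector, second_countable_topology} \<Rightarrow> real"
  assumes [measurable]: "g \<in> borel_measurable borel"
  shows "(\<lambda>z. g (fst z - snd z)) \<in> borel_measurable (restrict_space borel S \<Otimes>\<^sub>M restrict_space borel T)"
  by measurable

lemma lipschitz_on_measurable_restrict: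
  assumes "L-lipschitz_on S f"
  shows "f \<in> measurable (restrict_space borel S) (restrict_space borel (f ` S))"
proof (rule measurable_restrict_space2)
  show "f \<in> space (restrict_space borel S) \<rightarrow> f ` S" by (auto simp: space_restrict_space)
  show "f \<in> borel_measurable (restrict_space borel S)"
    using assms by (intro borel_measurable_continuous_on_restrict lipschitz_on_continuous_on)
qed

lemma space_Pp:
  assumes "Q \<in> Pp p S"
  shows "space Q = S"
proof -
  have "sets Q = sets (restrict_space borel S)" using assms unfolding Pp_def by blast
  from sets_eq_imp_space_eq[OF this] show ?thesis by (simp add: space_restrict_space)
qed

lemma distr_in_Pp:
  fixes f :: "'a::real_normed_vector \<Rightarrow> 'b::real_normed_vector"
  assumes "p \<ge> 0" and lip: "L-lipschitz_on S f" and Q: "Q \<in> Pp p S"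
  shows "distr Q (restrict_space borel (f ` S)) f \<in> Pp p (f ` S)"
proof -
  have sQ: "sets Q = sets (restrict_space borel S)" and probQ: "prob_space Q"
    and intQ: "integrable Q (\<lambda>x. norm x powr p)"
    using Q unfolding Pp_def by auto
  have fQ: "f \<in> measurable Q (restrict_space borel (f ` S))"
    using lipschitz_on_measurable_restrict[OF lip] by (simp add: measurable_cong_sets[OF sQ refl])
  obtain a where a: "a \<in> S"
    using prob_space.not_empty[OF probQ] space_Pp[OF Q] by auto
  have L: "L \<ge> 0" using lip by (rule lipschitz_on_nonneg)
  define A where "A = norm (f a) + L * norm a"
  have A: "A \<ge> 0" unfolding A_def using L by simp
  have growth: "norm (f x) \<le> A + L * norm x" if "x \<in> S" for x
  proof -
    have "norm (f x) \<le> norm (f a) + dist (f x) (f a)" by (simp add: dist_norm norm_triangle_sub)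
    also have "dist (f x) (f a) \<le> L * dist x a" using lip that a by (rule lipschitz_onD)
    also have "\<dots> \<le> L * (norm x + norm a)"
      using L by (intro mult_left_mono) (auto simp: dist_norm norm_triangle_ineq4)
    finally show ?thesis unfolding A_def by (simp add: algebra_simps)
  qed
  have "integrable Q (\<lambda>x. norm (f x) powr p)"
  proof (rule Bochner_Integration.integrable_bound)
    show "integrable Q (\<lambda>x. 2 powr p * A powr p + 2 powr p * L powr p * norm x powr p)"
      by (rule Bochner_Integration.integrable_add[OF
            finite_measure.integrable_const[OF prob_space.finite_measure[OF probQ]]
            integrable_mult_right[OF intQ]])
    show "(\<lambda>x. norm (f x) powr p) \<in> borel_measurable Q"
      using fQ by measurable
    show "AE x in Q. norm (norm (f x) powr p)
        \<le> norm (2 powr p * A powr p + 2 powr p * L powr p * norm x powr p)"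
    proof (rule AE_I2)
      fix x assume "x \<in> space Q"
      then have x: "x \<in> S" using space_Pp[OF Q] by simp
      have "norm (f x) powr p \<le> (A + L * norm x) powr p"
        using growth[OF x] \<open>p \<ge> 0\<close> by (intro powr_mono2) auto
      also have "\<dots> \<le> 2 powr p * (A powr p + (L * norm x) powr p)"
        using A L \<open>p \<ge> 0\<close> by (intro powr_add_le) auto
      also have "\<dots> = 2 powr p * A powr p + 2 powr p * L powr p * norm x powr p"
        using L by (simp add: powr_mult algebra_simps)
      finally show "norm (norm (f x) powr p)
          \<le> norm (2 powr p * A powr p + 2 powr p * L powr p * norm x powr p)"
        by simp
    qed
  qed
  then show ?thesis
    unfolding Pp_def using prob_space.prob_space_distr[OF probQ fQ]
    by (auto simp: integrable_distr_eq[OF fQ])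
qed

lemma measurable_sample:
  assumes "\<And>i. i < N \<Longrightarrow> xi i \<in> S"
  shows "xi \<in> measurable (uniform_count_measure {..<N}) (restrict_space borel S)"
  by (rule measurable_restrict_space2)
     (use assms in \<open>auto simp: space_uniform_count_measure measurable_def sets_uniform_count_measure\<close>)

lemma empirical_in_Pp:
  fixes xi :: "nat \<Rightarrow> 'a::real_normed_vector"
  assumes "N \<ge> 1" and xi: "\<And>i. i < N \<Longrightarrow> xi i \<in> S"
  shows "empirical N xi S \<in> Pp p S"
proof -
  let ?U = "uniform_count_measure {..<N}"
  have xim: "xi \<in> measurable ?U (restrict_space borel S)" by (rule measurable_sample[OF xi])
  have "prob_space ?U"
    using assms(1) by (intro prob_space_uniform_count_measure) (auto simp: lessThan_empty_iff)
  moreover have "integrable ?U (\<lambda>i. norm (xi i) powr p)"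
    unfolding uniform_count_measure_def by (rule integrable_point_measure_finite) simp
  ultimately show ?thesis
    unfolding Pp_def empirical_def
    by (auto simp: integrable_distr_eq[OF xim] intro: prob_space.prob_space_distr[OF _ xim])
qed

lemma empirical_comp:
  assumes f: "f \<in> measurable (restrict_space borel S) (restrict_space borel (f ` S))"
    and xi: "\<And>i. i < N \<Longrightarrow> xi i \<in> S"
  shows "empirical N (\<lambda>i. f (xi i)) (f ` S) = distr (empirical N xi S) (restrict_space borel (f ` S)) f"
  unfolding empirical_def by (simp add: distr_distr[OF f measurable_sample[OF xi]] comp_def)

definition transport_cost :: "real \<Rightarrow> ('a \<Rightarrow> 'a \<Rightarrow> real) \<Rightarrow> ('a \<times> 'a) measure \<Rightarrow> ennreal" where
  "transport_cost p d C = (\<integral>\<^sup>+ z. ennreal (d (fst z) (snd z) powr p) \<partial>C)"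

lemma wasserstein_transport_cost:
  "wasserstein p d M1 M2 = enn2real (INF C\<in>couplings M1 M2. transport_cost p d C) powr (1 / p)"
  unfolding wasserstein_def transport_cost_def ..

lemma pair_measure_in_couplings:
  assumes "prob_space M1" "prob_space M2"
  shows "M1 \<Otimes>\<^sub>M M2 \<in> couplings M1 M2"
proof -
  interpret pair_prob_space M1 M2
    using assms by (simp add: pair_prob_space_def pair_sigma_finite_def prob_space_imp_sigma_finite)
  have "distr (M1 \<Otimes>\<^sub>M M2) M2 snd = M2"
  proof (intro measure_eqI)
    fix A assume A: "A \<in> sets (distr (M1 \<Otimes>\<^sub>M M2) M2 snd)"
    then have "emeasure (distr (M1 \<Otimes>\<^sub>M M2) M2 snd) A = emeasure (M1 \<Otimes>\<^sub>M M2) (space M1 \<times> A)"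
      by (auto simp: emeasure_distr space_pair_measure dest: sets.sets_into_space
          intro!: arg_cong2[where f=emeasure])
    with A show "emeasure (distr (M1 \<Otimes>\<^sub>M M2) M2 snd) A = emeasure M2 A"
      by (simp add: M2.emeasure_pair_measure_Times M1.emeasure_space_1)
  qed simp
  then show ?thesis
    unfolding couplings_def using P.prob_space_axioms M2.distr_pair_fst by blast
qed

lemma couplings_distr_map_prod:
  assumes C: "C \<in> couplings M1 M2" and sM1: "sets M1 = sets R" and sM2: "sets M2 = sets R"
    and f: "f \<in> measurable R R'"
  shows "distr C (R' \<Otimes>\<^sub>M R') (map_prod f f) \<in> couplings (distr M1 R' f) (distr M2 R' f)"
proof -
  have sC: "sets C = sets (M1 \<Otimes>\<^sub>M M2)" and probC: "prob_space C"
    and m1: "distr C M1 fst = M1" and m2: "distr C M2 snd = M2"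
    using C unfolding couplings_def by auto
  have fstC: "fst \<in> measurable C M1" and sndC: "snd \<in> measurable C M2"
    by (simp_all add: measurable_cong_sets[OF sC refl])
  have fM1: "f \<in> measurable M1 R'" and fM2: "f \<in> measurable M2 R'"
    using f by (simp_all add: measurable_cong_sets[OF sM1 refl] measurable_cong_sets[OF sM2 refl])
  have T: "map_prod f f \<in> measurable C (R' \<Otimes>\<^sub>M R')"
    unfolding map_prod_def split_beta'
    by (intro measurable_Pair measurable_compose[OF fstC fM1] measurable_compose[OF sndC fM2])
  have fst': "fst \<in> measurable (R' \<Otimes>\<^sub>M R') (distr M1 R' f)"
    and snd': "snd \<in> measurable (R' \<Otimes>\<^sub>M R') (distr M2 R' f)"
    by (simp_all add: measurable_cong_sets[OF refl sets_distr])
  have "distr (distr C (R' \<Otimes>\<^sub>M R') (map_prod f f)) (distr M1 R' f) fst = distr C R' (f \<circ> fst)"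
    by (subst distr_distr[OF fst' T]) (auto intro!: distr_cong)
  also have "\<dots> = distr M1 R' f"
    using distr_distr[OF fM1 fstC] by (simp add: m1)
  finally have marg1: "distr (distr C (R' \<Otimes>\<^sub>M R') (map_prod f f)) (distr M1 R' f) fst = distr M1 R' f" .
  have "distr (distr C (R' \<Otimes>\<^sub>M R') (map_prod f f)) (distr M2 R' f) snd = distr C R' (f \<circ> snd)"
    by (subst distr_distr[OF snd' T]) (auto intro!: distr_cong)
  also have "\<dots> = distr M2 R' f"
    using distr_distr[OF fM2 sndC] by (simp add: m2)
  finally have marg2: "distr (distr C (R' \<Otimes>\<^sub>M R') (map_prod f f)) (distr M2 R' f) snd = distr M2 R' f" .
  show ?thesis
    unfolding couplings_def
    using marg1 marg2 prob_space.prob_space_distr[OF probC T]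
    by (auto intro!: sets_pair_measure_cong)
qed

lemma transport_cost_distr_map_prod_le:
  assumes "p \<ge> 0" "\<gamma> \<ge> 0" and sC: "sets C = sets (R \<Otimes>\<^sub>M R)" and f: "f \<in> measurable R R'"
    and d: "(\<lambda>z. d (fst z) (snd z)) \<in> borel_measurable (R \<Otimes>\<^sub>M R)"
    and e: "(\<lambda>z. e (fst z) (snd z)) \<in> borel_measurable (R' \<Otimes>\<^sub>M R')"
    and lip: "\<And>a b. a \<in> space R \<Longrightarrow> b \<in> space R \<Longrightarrow>
                0 \<le> d a b \<and> 0 \<le> e (f a) (f b) \<and> e (f a) (f b) \<le> \<gamma> * d a b"
  shows "transport_cost p e (distr C (R' \<Otimes>\<^sub>M R') (map_prod f f)) \<le> ennreal (\<gamma> powr p) * transport_cost p d C"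
proof -
  have spC: "space C = space R \<times> space R"
    using sets_eq_imp_space_eq[OF sC] by (simp add: space_pair_measure)
  have T: "map_prod f f \<in> measurable C (R' \<Otimes>\<^sub>M R')"
    unfolding measurable_cong_sets[OF sC refl] map_prod_def split_beta' using f by measurable
  have "transport_cost p e (distr C (R' \<Otimes>\<^sub>M R') (map_prod f f))
      = (\<integral>\<^sup>+ z. ennreal (e (f (fst z)) (f (snd z)) powr p) \<partial>C)"
    unfolding transport_cost_def using e by (simp add: nn_integral_distr[OF T])
  also have "\<dots> \<le> (\<integral>\<^sup>+ z. ennreal (\<gamma> powr p) * ennreal (d (fst z) (snd z) powr p) \<partial>C)"
  proof (rule nn_integral_mono)
    fix z assume "z \<in> space C"
    then have bounds: "0 \<le> d (fst z) (snd z)" "0 \<le> e (f (fst z)) (f (snd z))"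
      "e (f (fst z)) (f (snd z)) \<le> \<gamma> * d (fst z) (snd z)"
      using lip spC by (auto simp: mem_Times_iff)
    have "e (f (fst z)) (f (snd z)) powr p \<le> (\<gamma> * d (fst z) (snd z)) powr p"
      using bounds \<open>p \<ge> 0\<close> by (intro powr_mono2) auto
    also have "\<dots> = \<gamma> powr p * d (fst z) (snd z) powr p"
      using bounds \<open>\<gamma> \<ge> 0\<close> by (simp add: powr_mult)
    finally show "ennreal (e (f (fst z)) (f (snd z)) powr p)
        \<le> ennreal (\<gamma> powr p) * ennreal (d (fst z) (snd z) powr p)"
      by (simp add: ennreal_mult[symmetric] ennreal_leI del: ennreal_mult)
  qed
  also have "\<dots> = ennreal (\<gamma> powr p) * transport_cost p d C"
    unfolding transport_cost_def
    by (rule nn_integral_cmult) (use d in \<open>simp add: measurable_cong_sets[OF sC refl]\<close>)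
  finally show ?thesis .
qed

lemma wasserstein_distr_le:
  assumes "p > 0" "\<gamma> \<ge> 0" and sM1: "sets M1 = sets R" and sM2: "sets M2 = sets R"
    and f: "f \<in> measurable R R'"
    and d: "(\<lambda>z. d (fst z) (snd z)) \<in> borel_measurable (R \<Otimes>\<^sub>M R)"
    and e: "(\<lambda>z. e (fst z) (snd z)) \<in> borel_measurable (R' \<Otimes>\<^sub>M R')"
    and lip: "\<And>a b. a \<in> space R \<Longrightarrow> b \<in> space R \<Longrightarrow>
                0 \<le> d a b \<and> 0 \<le> e (f a) (f b) \<and> e (f a) (f b) \<le> \<gamma> * d a b"
    and finite: "(INF C\<in>couplings M1 M2. transport_cost p d C) < \<infinity>"
      \<comment> \<open>needed: wasserstein turns an infinite infimum into enn2real \<infinity> = 0\<close>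
  shows "wasserstein p e (distr M1 R' f) (distr M2 R' f) \<le> \<gamma> * wasserstein p d M1 M2"
proof -
  define I where "I = (INF C\<in>couplings M1 M2. transport_cost p d C)"
  have nonempty: "couplings M1 M2 \<noteq> {}" using finite by auto
  have sC: "sets C = sets (R \<Otimes>\<^sub>M R)" if "C \<in> couplings M1 M2" for C
    using that sets_pair_measure_cong[OF sM1 sM2] unfolding couplings_def by auto
  have "(INF C\<in>couplings (distr M1 R' f) (distr M2 R' f). transport_cost p e C)
      \<le> (INF C\<in>couplings M1 M2. transport_cost p e (distr C (R' \<Otimes>\<^sub>M R') (map_prod f f)))"
    by (rule INF_mono) (use couplings_distr_map_prod[OF _ sM1 sM2 f] in blast)
  also have "\<dots> \<le> (INF C\<in>couplings M1 M2. ennreal (\<gamma> powr p) * transport_cost p d C)"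
    using assms(1,2) by (intro INF_superset_mono order_refl
        transport_cost_distr_map_prod_le[OF _ _ sC f d e lip]) auto
  also have "\<dots> = ennreal (\<gamma> powr p) * I"
    unfolding I_def by (rule ennreal_mult_INF[symmetric]) (use nonempty in auto)
  finally have cost_le: "(INF C\<in>couplings (distr M1 R' f) (distr M2 R' f). transport_cost p e C)
      \<le> ennreal (\<gamma> powr p) * I" .
  obtain s where "s \<ge> 0" and I: "I = ennreal s"
    using finite unfolding I_def by (auto simp: less_top_ennreal)
  have "enn2real (INF C\<in>couplings (distr M1 R' f) (distr M2 R' f). transport_cost p e C)
      \<le> \<gamma> powr p * s"
    using cost_le \<open>s \<ge> 0\<close> unfolding I by (intro enn2real_leI) (auto simp: ennreal_mult)
  then have "wasserstein p e (distr M1 R' f) (distr M2 R' f) \<le> (\<gamma> powr p * s) powr (1 / p)"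
    unfolding wasserstein_transport_cost using \<open>p > 0\<close> by (intro powr_mono2) auto
  also have "\<dots> = \<gamma> * wasserstein p d M1 M2"
    unfolding wasserstein_transport_cost I_def[symmetric] I
    using assms(1,2) \<open>s \<ge> 0\<close> by (simp add: powr_mult powr_powr)
  finally show ?thesis .
qed

lemma transport_cost_finite:
  assumes C: "C \<in> couplings M1 M2" and h: "integrable M1 h" and g: "integrable M2 g"
    and bound: "\<And>a b. a \<in> space M1 \<Longrightarrow> b \<in> space M2 \<Longrightarrow>
                  0 \<le> h a \<and> 0 \<le> g b \<and> d a b powr p \<le> h a + g b"
  shows "transport_cost p d C < \<infinity>"
proof -
  have sC: "sets C = sets (M1 \<Otimes>\<^sub>M M2)" and m1: "distr C M1 fst = M1" and m2: "distr C M2 snd = M2"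
    using C unfolding couplings_def by auto
  have spC: "space C = space M1 \<times> space M2"
    using sets_eq_imp_space_eq[OF sC] by (simp add: space_pair_measure)
  have fstC: "fst \<in> measurable C M1" and sndC: "snd \<in> measurable C M2"
    by (simp_all add: measurable_cong_sets[OF sC refl])
  have [measurable]: "h \<in> borel_measurable M1" "g \<in> borel_measurable M2"
    using h g by auto
  have [measurable]: "(\<lambda>z. h (fst z)) \<in> borel_measurable C" "(\<lambda>z. g (snd z)) \<in> borel_measurable C"
    by (auto intro: measurable_compose[OF fstC] measurable_compose[OF sndC])
  have "transport_cost p d C \<le> (\<integral>\<^sup>+ z. ennreal (h (fst z)) + ennreal (g (snd z)) \<partial>C)"
    unfolding transport_cost_def
  proof (rule nn_integral_mono)
    fix z assume "z \<in> space C"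
    then have "0 \<le> h (fst z)" "0 \<le> g (snd z)" "d (fst z) (snd z) powr p \<le> h (fst z) + g (snd z)"
      using bound spC by (auto simp: mem_Times_iff)
    then show "ennreal (d (fst z) (snd z) powr p) \<le> ennreal (h (fst z)) + ennreal (g (snd z))"
      by (simp add: ennreal_plus[symmetric] ennreal_leI del: ennreal_plus)
  qed
  also have "\<dots> = (\<integral>\<^sup>+ z. ennreal (h (fst z)) \<partial>C) + (\<integral>\<^sup>+ z. ennreal (g (snd z)) \<partial>C)"
    by (intro nn_integral_add) measurable
  also have "\<dots> = (\<integral>\<^sup>+ x. ennreal (h x) \<partial>M1) + (\<integral>\<^sup>+ x. ennreal (g x) \<partial>M2)"
    using nn_integral_distr[OF fstC, of "\<lambda>x. ennreal (h x)"] nn_integral_distr[OF sndC, of "\<lambda>x. ennreal (g x)"]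
    by (simp add: m1 m2)
  also have "\<dots> < \<infinity>"
    using integrableD(2)[OF h] integrableD(2)[OF g] by (simp add: less_top)
  finally show ?thesis .
qed

lemma INF_transport_cost_finite:
  fixes d :: "'a::real_normed_vector \<Rightarrow> 'a \<Rightarrow> real"
  assumes "p \<ge> 0" "K \<ge> 0" and M1: "M1 \<in> Pp p S" and M2: "M2 \<in> Pp p S"
    and d: "\<And>a b. a \<in> S \<Longrightarrow> b \<in> S \<Longrightarrow> 0 \<le> d a b \<and> d a b \<le> K * norm (a - b)"
  shows "(INF C\<in>couplings M1 M2. transport_cost p d C) < \<infinity>"
proof -
  define c where "c = (2 * K) powr p"
  have "prob_space M1" "prob_space M2"
    and int1: "integrable M1 (\<lambda>x. norm x powr p)" and int2: "integrable M2 (\<lambda>x. norm x powr p)"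
    using M1 M2 unfolding Pp_def by auto
  have C: "M1 \<Otimes>\<^sub>M M2 \<in> couplings M1 M2"
    using \<open>prob_space M1\<close> \<open>prob_space M2\<close> by (rule pair_measure_in_couplings)
  have "transport_cost p d (M1 \<Otimes>\<^sub>M M2) < \<infinity>"
  proof (rule transport_cost_finite[OF C integrable_mult_right[OF int1] integrable_mult_right[OF int2]])
    fix a b assume "a \<in> space M1" "b \<in> space M2"
    then have ab: "0 \<le> d a b" "d a b \<le> K * (norm a + norm b)"
      using d[of a b] space_Pp[OF M1] space_Pp[OF M2] \<open>K \<ge> 0\<close>
      by (auto intro: order_trans[OF _ mult_left_mono[OF norm_triangle_ineq4]])
    have "d a b powr p \<le> (K * norm a + K * norm b) powr p"
      using ab \<open>p \<ge> 0\<close> by (intro powr_mono2) (auto simp: distrib_left)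
    also have "\<dots> \<le> 2 powr p * ((K * norm a) powr p + (K * norm b) powr p)"
      using assms(1,2) by (intro powr_add_le) auto
    also have "\<dots> = c * norm a powr p + c * norm b powr p"
      using assms(1,2) unfolding c_def by (simp add: powr_mult algebra_simps)
    finally show "0 \<le> c * norm a powr p \<and> 0 \<le> c * norm b powr p
        \<and> d a b powr p \<le> c * norm a powr p + c * norm b powr p"
      unfolding c_def by auto
  qed
  then show ?thesis by (rule le_less_trans[OF INF_lower[OF C]])
qed

lemma distr_in_wball:
  fixes f :: "real ^ 'n \<Rightarrow> real"
  assumes "p > 0" "q > 0" and bdd: "bdd_above (lip_quotients q f \<Xi>)"
    and "N \<ge> 1" and xi: "\<And>i. i < N \<Longrightarrow> xi i \<in> \<Xi>"
    and Q: "Q \<in> wball p (\<lambda>a b. lqnorm q (a - b)) \<Xi> (empirical N xi \<Xi>) \<epsilon>"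
  shows "distr Q (restrict_space borel (f ` \<Xi>)) f
           \<in> wball p (\<lambda>s t. \<bar>s - t\<bar>) (f ` \<Xi>) (empirical N (\<lambda>i. f (xi i)) (f ` \<Xi>))
               (\<epsilon> * lip_norm q f \<Xi>)"
proof -
  let ?R = "restrict_space borel \<Xi>" and ?R' = "restrict_space borel (f ` \<Xi>)"
  let ?P = "empirical N xi \<Xi>"
  define \<gamma> where "\<gamma> = lip_norm q f \<Xi>"
  define c where "c = real CARD('n) powr (1 / q)"
  have \<gamma>: "\<gamma> \<ge> 0" unfolding \<gamma>_def using bdd by (rule lip_norm_nonneg)
  have lip: "(\<gamma> * c)-lipschitz_on \<Xi> f"
    unfolding \<gamma>_def c_def using \<open>q > 0\<close> bdd by (rule lipschitz_on_lip_norm)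
  have f: "f \<in> measurable ?R ?R'" using lip by (rule lipschitz_on_measurable_restrict)
  have QPp: "Q \<in> Pp p \<Xi>" and W: "wasserstein p (\<lambda>a b. lqnorm q (a - b)) Q ?P \<le> \<epsilon>"
    using Q unfolding wball_def by auto
  have PPp: "?P \<in> Pp p \<Xi>" using \<open>N \<ge> 1\<close> xi by (rule empirical_in_Pp)
  have sets: "sets Q = sets ?R" "sets ?P = sets ?R" using QPp PPp unfolding Pp_def by auto
  have finite: "(INF C\<in>couplings Q ?P. transport_cost p (\<lambda>a b. lqnorm q (a - b)) C) < \<infinity>"
    by (rule INF_transport_cost_finite[where K = c, OF _ _ QPp PPp])
       (use \<open>p > 0\<close> in \<open>auto simp: c_def lqnorm_nonneg lqnorm_le_norm[OF \<open>q > 0\<close>]\<close>)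
  have "wasserstein p (\<lambda>s t. \<bar>s - t\<bar>) (distr Q ?R' f) (distr ?P ?R' f)
      \<le> \<gamma> * wasserstein p (\<lambda>a b. lqnorm q (a - b)) Q ?P"
  proof (rule wasserstein_distr_le[OF \<open>p > 0\<close> \<gamma> sets f _ _ _ finite])
    show "(\<lambda>z. lqnorm q (fst z - snd z)) \<in> borel_measurable (?R \<Otimes>\<^sub>M ?R)"
      and "(\<lambda>z. \<bar>fst z - snd z\<bar>) \<in> borel_measurable (?R' \<Otimes>\<^sub>M ?R')"
      by (intro borel_measurable_diff_cost; measurable)+
    fix a b assume "a \<in> space ?R" "b \<in> space ?R"
    then show "0 \<le> lqnorm q (a - b) \<and> 0 \<le> \<bar>f a - f b\<bar> \<and> \<bar>f a - f b\<bar> \<le> \<gamma> * lqnorm q (a - b)"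
      unfolding \<gamma>_def
      by (auto simp: space_restrict_space lqnorm_nonneg intro: abs_diff_le_lip_norm[OF \<open>q > 0\<close> bdd])
  qed
  also have "\<dots> \<le> \<epsilon> * \<gamma>"
    using mult_left_mono[OF W \<gamma>] by (simp add: mult.commute)
  finally show ?thesis
    using distr_in_Pp[OF _ lip QPp] \<open>p > 0\<close> empirical_comp[OF f xi]
    unfolding wball_def \<gamma>_def[symmetric] by simp
qed

theorem corollary1:
  fixes p q \<epsilon> :: real
    and X :: "(real ^ 'm) set" and \<Xi> :: "(real ^ 'n) set"
    and F :: "real ^ 'm \<Rightarrow> real ^ 'n \<Rightarrow> real"
    and N :: nat and xi :: "nat \<Rightarrow> real ^ 'n"
  assumes "p \<ge> 1" and "q \<ge> 1" and "\<epsilon> \<ge> 0"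
    and "\<And>x. x \<in> X \<Longrightarrow> bdd_above (lip_quotients q (F x) \<Xi>)"
    and "N \<ge> 1" and "\<And>i. i < N \<Longrightarrow> xi i \<in> \<Xi>"
  shows "J_S p q \<epsilon> X \<Xi> F N xi \<le> J_A p q \<epsilon> X \<Xi> F N xi"
  unfolding J_S_def J_A_def
proof (rule INF_superset_mono[OF order_refl], rule SUP_mono, goal_cases)
  case (1 x Q)
  let ?R' = "restrict_space borel (F x ` \<Xi>)"
  have q: "q > 0" using assms(2) by simp
  have bdd: "bdd_above (lip_quotients q (F x) \<Xi>)" using assms(4)[OF 1(1)] .
  have sQ: "sets Q = sets (restrict_space borel \<Xi>)" using 1(2) unfolding wball_def Pp_def by blast
  have fQ: "F x \<in> measurable Q ?R'"
    unfolding measurable_cong_sets[OF sQ refl]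
    by (rule lipschitz_on_measurable_restrict[OF lipschitz_on_lip_norm[OF q bdd]])
  have mem: "distr Q ?R' (F x) \<in> wball p (\<lambda>s t. \<bar>s - t\<bar>) (F x ` \<Xi>)
      (empirical N (\<lambda>i. F x (xi i)) (F x ` \<Xi>)) (\<epsilon> * lip_norm q (F x) \<Xi>)"
    by (rule distr_in_wball[OF _ q bdd assms(5,6) 1(2)]) (use assms(1) in simp)
  show ?case
    by (rule bexI[OF _ mem]) (simp add: integral_distr[OF fQ measurable_restrict_ident])
qed

end
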